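(* Let $a,b,c,\alpha\in\mathbb{R}$ with $\alpha\neq 0$ and $b\neq 0$, and let $\Omega\subset\mathbb{R}$ be a compact interval containing $0$ in its interior. Consider the control system on $\mathbb{R}^2$ $$\dot s=\omega b,\qquad \dot t=\tfrac12\alpha s^2+\omega(c+as),\qquad \omega\in\Omega,$$ with drift $f_0(s,t)=(0,\tfrac12\alpha s^2)$. Then the control sets of this system are exactly the one-point sets given by the singularities of the drift, namely the singletons $\{(0,t)\}$, $t\in\mathbb{R}$.
   Context: Controls are piecewise constant functions $\omega:\mathbb{R}\to\Omega$; $\varphi(\tau,\mathbf v,\omega)$ is the solution at time $\tau$ from $\mathbf v$, and $\mathcal O^+(\mathbf v)$ is the set of points reachable from $\mathbf v$ in nonnegative time. A control set is a nonempty set $\mathcal C\subset\mathbb{R}^2$, maximal with respect to inclusion, such that (i) for every $x\in\mathcal C$ there is a control $\omega$ with $\varphi(\tau,x,\omega)\in\mathcal C$ for all $\tau\ge0$, and (ii) $\mathcal C\subset\overline{\mathcal O^+(x)}$ for all $x\in\mathcal C$. This is the singular linear control system on $(\mathbb{R}\mathbf e_1\times\{0\})\backslash\mathbb{H}\simeq\mathbb{R}^2$ with $\alpha\neq0$, $\lambda=\beta=\gamma=0$. *)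

theory Defs
  imports "HOL-Analysis.Analysis"
begin

definition sys_field :: "real \<Rightarrow> real \<Rightarrow> real \<Rightarrow> real \<Rightarrow> real \<Rightarrow> real \<times> real \<Rightarrow> real \<times> real" where
  "sys_field a b c \<alpha> u z = (u * b, \<alpha> / 2 * (fst z)^2 + u * (c + a * fst z))"

definition loc_const :: "(real \<Rightarrow> real) \<Rightarrow> real \<Rightarrow> bool" where
  "loc_const \<omega> \<tau> \<longleftrightarrow> (\<exists>e>0. \<forall>\<sigma>. dist \<sigma> \<tau> < e \<longrightarrow> \<omega> \<sigma> = \<omega> \<tau>)"

definition pc_control :: "real set \<Rightarrow> (real \<Rightarrow> real) \<Rightarrow> bool" where
  "pc_control \<Omega> \<omega> \<longleftrightarrow> (\<forall>\<tau>. \<omega> \<tau> \<in> \<Omega>) \<and>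
     (\<forall>p q. finite {\<tau> \<in> {p..q}. \<not> loc_const \<omega> \<tau>})"

text \<open>x is the solution from v under control omega: continuous, x 0 = v, and
  solves the ODE wherever the control is locally constant.  (Solutions exist
  globally and are unique, so this determines phi(tau, v, omega) = x tau.)\<close>
definition is_solution :: "real \<Rightarrow> real \<Rightarrow> real \<Rightarrow> real \<Rightarrow> (real \<Rightarrow> real)
    \<Rightarrow> real \<times> real \<Rightarrow> (real \<Rightarrow> real \<times> real) \<Rightarrow> bool" where
  "is_solution a b c \<alpha> \<omega> v x \<longleftrightarrow> continuous_on UNIV x \<and> x 0 = v \<and>
     (\<forall>\<tau>. loc_const \<omega> \<tau> \<longrightarrow> (x has_vector_derivative sys_field a b c \<alpha> (\<omega> \<tau>) (x \<tau>)) (at \<tau>))"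

definition orbit_pos :: "real \<Rightarrow> real \<Rightarrow> real \<Rightarrow> real \<Rightarrow> real set \<Rightarrow> real \<times> real \<Rightarrow> (real \<times> real) set" where
  "orbit_pos a b c \<alpha> \<Omega> v = {y. \<exists>\<omega> x \<tau>. pc_control \<Omega> \<omega> \<and> is_solution a b c \<alpha> \<omega> v x \<and> \<tau> \<ge> 0 \<and> x \<tau> = y}"

definition ctrl_props :: "real \<Rightarrow> real \<Rightarrow> real \<Rightarrow> real \<Rightarrow> real set \<Rightarrow> (real \<times> real) set \<Rightarrow> bool" where
  "ctrl_props a b c \<alpha> \<Omega> D \<longleftrightarrow>
     (\<forall>v\<in>D. \<exists>\<omega> x. pc_control \<Omega> \<omega> \<and> is_solution a b c \<alpha> \<omega> v x \<and> (\<forall>\<tau>\<ge>0. x \<tau> \<in> D)) \<and>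
     (\<forall>v\<in>D. D \<subseteq> closure (orbit_pos a b c \<alpha> \<Omega> v))"

definition control_set :: "real \<Rightarrow> real \<Rightarrow> real \<Rightarrow> real \<Rightarrow> real set \<Rightarrow> (real \<times> real) set \<Rightarrow> bool" where
  "control_set a b c \<alpha> \<Omega> C \<longleftrightarrow> C \<noteq> {} \<and> ctrl_props a b c \<alpha> \<Omega> C \<and>
     (\<forall>D. C \<subseteq> D \<and> ctrl_props a b c \<alpha> \<Omega> D \<longrightarrow> D = C)"

end

theory Submission
  imports Defs
begin

text \<open>The function \<open>lyap\<close> below is chosen so that its derivative along every trajectory
  equals \<open>s\<^sup>2/2\<close>, independently of the control: the control terms
  \<open>\<omega> (c + a s)\<close> in the \<open>t\<close>-equation are exactly cancelled by the derivative of
  \<open>(c s + a s\<^sup>2/2)/b\<close>. Hence \<open>lyap\<close> never decreases along trajectories, so it is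
  constant on any set satisfying both control-set properties. A trajectory staying in
  such a set therefore has \<open>\<integral> s\<^sup>2 = 0\<close>, which forces \<open>s = 0\<close> at its start;
  two points with \<open>s = 0\<close> and equal \<open>lyap\<close> coincide. Conversely the zero control
  keeps every point \<open>(0, t)\<close> at rest.\<close>

definition lyap :: "real \<Rightarrow> real \<Rightarrow> real \<Rightarrow> real \<Rightarrow> real \<times> real \<Rightarrow> real" where
  "lyap a b c \<alpha> z = (snd z - (c * fst z + a * (fst z)^2 / 2) / b) / \<alpha>"

lemma continuous_on_lyap: "continuous_on UNIV (lyap a b c \<alpha>)"
  unfolding lyap_def divide_inverse by (intro continuous_intros)

lemma lyap_has_vector_derivative:
  assumes "\<alpha> \<noteq> 0" "b \<noteq> 0"
    and x': "(x has_vector_derivative sys_field a b c \<alpha> u (x \<tau>)) (at \<tau>)"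
  shows "((\<lambda>t. lyap a b c \<alpha> (x t)) has_vector_derivative (fst (x \<tau>))^2 / 2) (at \<tau>)"
proof -
  have s': "((\<lambda>t. fst (x t)) has_real_derivative u * b) (at \<tau>)"
    using bounded_linear.has_vector_derivative[OF bounded_linear_fst x']
    by (simp add: sys_field_def has_real_derivative_iff_has_vector_derivative)
  have t': "((\<lambda>t. snd (x t)) has_real_derivative \<alpha> / 2 * (fst (x \<tau>))^2 + u * (c + a * fst (x \<tau>))) (at \<tau>)"
    using bounded_linear.has_vector_derivative[OF bounded_linear_snd x']
    by (simp add: sys_field_def has_real_derivative_iff_has_vector_derivative)
  have "((\<lambda>t. lyap a b c \<alpha> (x t)) has_real_derivative (fst (x \<tau>))^2 / 2) (at \<tau>)"
    unfolding lyap_def using assms(1,2)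
    by (auto intro!: derivative_eq_intros s' t' simp: field_simps power2_eq_square)
  then show ?thesis
    by (simp add: has_real_derivative_iff_has_vector_derivative)
qed

lemma lyap_increment_has_integral:
  assumes "\<alpha> \<noteq> 0" "b \<noteq> 0" "pc_control \<Omega> \<omega>" "is_solution a b c \<alpha> \<omega> v x" "p \<le> q"
  shows "((\<lambda>t. (fst (x t))^2 / 2) has_integral lyap a b c \<alpha> (x q) - lyap a b c \<alpha> (x p)) {p..q}"
proof (rule fundamental_theorem_of_calculus_strong)
  show "finite {\<tau> \<in> {p..q}. \<not> loc_const \<omega> \<tau>}"
    using assms(3) unfolding pc_control_def by blast
  show "((\<lambda>t. lyap a b c \<alpha> (x t)) has_vector_derivative (fst (x \<tau>))^2 / 2) (at \<tau>)"
    if "\<tau> \<in> {p..q} - {\<tau> \<in> {p..q}. \<not> loc_const \<omega> \<tau>}" for \<tau>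
    using that assms(4) unfolding is_solution_def
    by (auto intro!: lyap_has_vector_derivative[OF assms(1,2)])
  have "continuous_on UNIV x"
    using assms(4) unfolding is_solution_def by blast
  then have "continuous_on UNIV (\<lambda>t. lyap a b c \<alpha> (x t))"
    using continuous_on_compose2[OF continuous_on_lyap] by blast
  then show "continuous_on {p..q} (\<lambda>t. lyap a b c \<alpha> (x t))"
    by (rule continuous_on_subset) simp
qed (fact assms(5))

lemma lyap_mono_solution:
  assumes "\<alpha> \<noteq> 0" "b \<noteq> 0" "pc_control \<Omega> \<omega>" "is_solution a b c \<alpha> \<omega> v x" "p \<le> q"
  shows "lyap a b c \<alpha> (x p) \<le> lyap a b c \<alpha> (x q)"
  using has_integral_nonneg[OF lyap_increment_has_integral[OF assms]] by simp

lemma closure_orbit_pos_subset_lyap_superlevel: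
  assumes "\<alpha> \<noteq> 0" "b \<noteq> 0"
  shows "closure (orbit_pos a b c \<alpha> \<Omega> v) \<subseteq> {z. lyap a b c \<alpha> v \<le> lyap a b c \<alpha> z}"
proof (rule closure_minimal)
  show "closed {z. lyap a b c \<alpha> v \<le> lyap a b c \<alpha> z}"
    by (rule closed_Collect_le[OF continuous_on_const continuous_on_lyap])
  show "orbit_pos a b c \<alpha> \<Omega> v \<subseteq> {z. lyap a b c \<alpha> v \<le> lyap a b c \<alpha> z}"
  proof
    fix z assume "z \<in> orbit_pos a b c \<alpha> \<Omega> v"
    then obtain \<omega> x \<tau> where sol: "pc_control \<Omega> \<omega>" "is_solution a b c \<alpha> \<omega> v x" "0 \<le> \<tau>" "x \<tau> = z"
      unfolding orbit_pos_def by blast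
    moreover have "x 0 = v"
      using sol(2) unfolding is_solution_def by blast
    ultimately show "z \<in> {z. lyap a b c \<alpha> v \<le> lyap a b c \<alpha> z}"
      using lyap_mono_solution[OF assms sol(1,2,3)] by simp
  qed
qed

lemma ctrl_props_lyap_eq:
  assumes "\<alpha> \<noteq> 0" "b \<noteq> 0" "ctrl_props a b c \<alpha> \<Omega> D" "w \<in> D" "z \<in> D"
  shows "lyap a b c \<alpha> w = lyap a b c \<alpha> z"
proof -
  have "lyap a b c \<alpha> v \<le> lyap a b c \<alpha> y" if "v \<in> D" "y \<in> D" for v y
  proof -
    have "y \<in> closure (orbit_pos a b c \<alpha> \<Omega> v)"
      using assms(3) that unfolding ctrl_props_def by blast
    then show ?thesis
      using closure_orbit_pos_subset_lyap_superlevel[OF assms(1,2)] by blast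
  qed
  then show ?thesis
    using assms(4,5) by (meson order_antisym)
qed

lemma ctrl_props_fst_eq_0:
  assumes "\<alpha> \<noteq> 0" "b \<noteq> 0" "ctrl_props a b c \<alpha> \<Omega> D" "w \<in> D"
  shows "fst w = 0"
proof -
  obtain \<omega> x where sol: "pc_control \<Omega> \<omega>" "is_solution a b c \<alpha> \<omega> w x" and stays: "\<forall>\<tau>\<ge>0. x \<tau> \<in> D"
    using assms(3,4) unfolding ctrl_props_def by blast
  have "lyap a b c \<alpha> (x 1) = lyap a b c \<alpha> (x 0)"
    using ctrl_props_lyap_eq[OF assms(1-3)] stays by simp
  then have "((\<lambda>t. (fst (x t))^2 / 2) has_integral 0) (cbox 0 1)"
    using lyap_increment_has_integral[OF assms(1,2) sol, of 0 1] by simp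
  moreover have "continuous_on UNIV x"
    using sol(2) unfolding is_solution_def by blast
  then have "continuous_on (cbox 0 1) (\<lambda>t. (fst (x t))^2 / 2)"
    by (intro continuous_intros) (rule continuous_on_subset, auto)
  ultimately have "(fst (x 0))^2 / 2 = 0"
    by (intro has_integral_0_cbox_imp_0[where x = 0]) auto
  moreover have "x 0 = w"
    using sol(2) unfolding is_solution_def by blast
  ultimately show ?thesis by simp
qed

lemma ctrl_props_eq_singleton:
  assumes "\<alpha> \<noteq> 0" "b \<noteq> 0" "ctrl_props a b c \<alpha> \<Omega> D" "v \<in> D"
  shows "D = {(0, snd v)}"
proof -
  have on_axis: "z = (0, snd v)" if "z \<in> D" for z
  proof -
    have "fst z = 0" "fst v = 0"
      using ctrl_props_fst_eq_0[OF assms(1-3)] that assms(4) by auto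
    moreover have "lyap a b c \<alpha> z = lyap a b c \<alpha> v"
      using ctrl_props_lyap_eq[OF assms(1-3) that assms(4)] .
    ultimately show ?thesis
      using assms(1) by (cases z) (simp add: lyap_def)
  qed
  moreover have "(0, snd v) \<in> D"
    using on_axis[OF assms(4)] assms(4) by simp
  ultimately show ?thesis by blast
qed

lemma ctrl_props_rest_point:
  assumes "0 \<in> \<Omega>"
  shows "ctrl_props a b c \<alpha> \<Omega> {(0, t)}"
proof -
  have ctrl: "pc_control \<Omega> (\<lambda>_. 0)"
    using assms unfolding pc_control_def loc_const_def by (simp add: gt_ex)
  have sol: "is_solution a b c \<alpha> (\<lambda>_. 0) (0, t) (\<lambda>_. (0, t))"
    unfolding is_solution_def sys_field_def by (simp add: zero_prod_def[symmetric])
  then have "(0, t) \<in> orbit_pos a b c \<alpha> \<Omega> (0, t)"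
    unfolding orbit_pos_def using ctrl by force
  then show ?thesis
    unfolding ctrl_props_def using ctrl sol closure_subset by fastforce
qed

theorem proposition7:
  fixes a b c \<alpha> u0 u1 :: real and C :: "(real \<times> real) set"
  assumes "\<alpha> \<noteq> 0" and "b \<noteq> 0" and "u0 < 0" and "0 < u1"
  shows "control_set a b c \<alpha> {u0..u1} C \<longleftrightarrow> (\<exists>t. C = {(0, t)})"
proof
  assume "control_set a b c \<alpha> {u0..u1} C"
  then obtain v where "ctrl_props a b c \<alpha> {u0..u1} C" "v \<in> C"
    unfolding control_set_def by blast
  then show "\<exists>t. C = {(0, t)}"
    using ctrl_props_eq_singleton[OF assms(1,2)] by blast
next
  assume "\<exists>t. C = {(0, t)}"
  then obtain t where C: "C = {(0, t)}" by blast
  have "ctrl_props a b c \<alpha> {u0..u1} C"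
    using C ctrl_props_rest_point assms(3,4) by simp
  moreover have "D = C" if "C \<subseteq> D" "ctrl_props a b c \<alpha> {u0..u1} D" for D
    using ctrl_props_eq_singleton[OF assms(1,2) that(2), of "(0, t)"] that(1) C by simp
  ultimately show "control_set a b c \<alpha> {u0..u1} C"
    unfolding control_set_def using C by blast
qed

end
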